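(* Let $i\ge 3$ and $k\ge 3$ be integers, let $p$ be a nonnegative integer, and put $r=\lfloor (F_i-1)/F_k\rfloor$. If $r\ge p$, then $$n_p(F_i,F_{i+2},F_{i+k})=\tfrac12\bigl((F_i+2pF_k-1)F_{i+2}-F_i+1\bigr)-\tfrac12\bigl(2rF_i-(r+p+1)(r-p)F_k\bigr)F_{k-2}.$$
   Context: Fibonacci numbers: $F_0=0$, $F_1=1$, $F_n=F_{n-1}+F_{n-2}$. For positive integers $a_1,\dots,a_l$ with $\gcd(a_1,\dots,a_l)=1$ and an integer $n$, let $d(n;a_1,\dots,a_l)$ be the number of tuples $(x_1,\dots,x_l)$ of nonnegative integers with $a_1x_1+\dots+a_lx_l=n$. For a nonnegative integer $p$, the $p$-Sylvester number $n_p(a_1,\dots,a_l)$ is the number of nonnegative integers $n$ with $d(n;a_1,\dots,a_l)\le p$. *)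

theory Defs
  imports Main "HOL-Number_Theory.Fib"
begin

definition num_reps :: "nat \<Rightarrow> nat list \<Rightarrow> nat" where
  "num_reps n as = card {xs :: nat list. length xs = length as \<and>
      (\<Sum>j<length as. as ! j * xs ! j) = n}"

definition sylvester_p :: "nat \<Rightarrow> nat list \<Rightarrow> nat" where
  "sylvester_p p as = card {n :: nat. num_reps n as \<le> p}"

end

theory Submission
  imports Defs "HOL-Number_Theory.Cong"
begin

(* Since a and b are coprime, every integer n is uniquely b t + a e with 0 \<le> t < a, e \<in> \<int>, and
   n \<ge> 0 exactly when e \<ge> -\<lfloor>b t / a\<rfloor>. Because c = f b - g a, the representations of n by
   (a, b, c) are in bijection with the lattice points (m, z) satisfying f z \<le> t + a m and
   b m \<le> e + g z, and b \<ge> 2a, f \<ge> 2g confine the relevant points to m \<in> {0, 1}. Counting them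
   shows that d(n) \<le> p iff e < E(t) for an explicit threshold E(t), so
   n_p = \<Sum>_{t<a} (E(t) + \<lfloor>b t / a\<rfloor>); the floor sum is (a - 1)(b - 1)/2 and the sum of E(t)
   reduces to sums of \<lfloor>t / f\<rfloor>. The identity F_{i+k} = F_k F_{i+2} - F_{k-2} F_i puts
   (F_i, F_{i+2}, F_{i+k}) in this setting with f = F_k, g = F_{k-2}. *)

lemma fib_add_two_mult: "fib (n + k + 2) + fib k * fib n = fib (k + 2) * fib (n + 2)"
proof -
  have "fib (n + k + 2) = fib (k + 2) * fib (Suc n) + fib (Suc k) * fib n"
    using fib_add[of n "Suc k"] by simp
  then show ?thesis
    by (simp add: fib_plus_2[of n] fib_plus_2[of k] algebra_simps)
qed

lemma coprime_fib_add_two: "coprime (fib n) (fib (n + 2))"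
proof -
  have "gcd n (n + 2) dvd 2"
    by (metis add_diff_cancel_left' dvd_diff_nat gcd_dvd1 gcd_dvd2)
  then have "gcd n (n + 2) \<le> 2"
    by (rule dvd_imp_le) simp
  moreover have "0 < gcd n (n + 2)"
    by simp
  ultimately have "gcd n (n + 2) = 1 \<or> gcd n (n + 2) = 2"
    by linarith
  then have "fib (gcd n (n + 2)) = 1"
    by auto
  then show ?thesis
    by (metis fib_gcd coprime_iff_gcd_eq_1)
qed

lemma bij_betw_mult_mod:
  fixes a b :: nat
  assumes "coprime b a"
  shows "bij_betw (\<lambda>t. b * t mod a) {..<a} {..<a}"
proof -
  have "inj_on (\<lambda>t. b * t mod a) {..<a}"
  proof (rule inj_onI)
    fix t t' assume "t \<in> {..<a}" "t' \<in> {..<a}" "b * t mod a = b * t' mod a"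
    then show "t = t'"
      using assms cong_mult_lcancel_nat cong_less_modulus_unique_nat
      by (metis cong_def lessThan_iff)
  qed
  moreover have "(\<lambda>t. b * t mod a) ` {..<a} \<subseteq> {..<a}"
    by auto
  ultimately show ?thesis
    by (simp add: bij_betw_def card_image card_subset_eq)
qed

lemma residue_decomposition:
  fixes a b n :: nat
  assumes "coprime b a" and "0 < a"
  obtains t e where "t < a" and "int n = int b * int t + int a * e"
proof -
  have "n mod a \<in> (\<lambda>t. b * t mod a) ` {..<a}"
    using bij_betw_imp_surj_on[OF bij_betw_mult_mod[OF assms(1)]] assms(2) by simp
  then obtain t where "t < a" and "n mod a = b * t mod a"
    by blast
  then have "int a dvd int n - int b * int t"
    by (metis mod_eq_dvd_iff of_nat_mult zmod_int)
  then obtain e where "int n - int b * int t = int a * e"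
    by (elim dvdE)
  with \<open>t < a\<close> show ?thesis
    using that by (simp add: algebra_simps)
qed

lemma residue_decomposition_unique:
  fixes a b t t' :: nat
  assumes "coprime b a" and "t < a" and "t' < a"
    and "int b * int t + int a * e = int b * int t' + int a * e'"
  shows "t = t'" and "e = e'"
proof -
  have "(int b * int t + int a * e) mod int a = (int b * int t' + int a * e') mod int a"
    using assms(4) by simp
  then have "b * t mod a = b * t' mod a"
    by (metis mod_mult_self2 mult.commute of_nat_eq_iff of_nat_mult zmod_int)
  then show "t = t'"
    using bij_betw_imp_inj_on[OF bij_betw_mult_mod[OF assms(1)]] assms(2,3)
    by (auto dest: inj_onD)
  with assms(2,4) show "e = e'"
    by simp
qed

lemma minus_div_le_iff:
  fixes a x :: nat
  assumes "0 < a"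
  shows "- int (x div a) \<le> e \<longleftrightarrow> 0 \<le> int x + int a * e"
proof -
  have "(int x + int a * e) div int a = int (x div a) + e"
    using assms by (simp add: zdiv_int)
  with assms have "0 \<le> int x + int a * e \<longleftrightarrow> 0 \<le> int (x div a) + e"
    using pos_imp_zdiv_nonneg_iff[of "int a" "int x + int a * e"] by (simp add: ac_simps)
  then show ?thesis
    by linarith
qed

lemma double_sum_mult_div:
  fixes a b :: nat
  assumes "coprime b a" and "0 < a"
  shows "2 * (\<Sum>t<a. int (b * t div a)) = (int a - 1) * (int b - 1)"
proof -
  have "(\<Sum>t<a. int (b * t mod a)) = (\<Sum>t<a. int t)"
    using sum.reindex_bij_betw[OF bij_betw_mult_mod[OF assms(1)], of int] by simp
  moreover have "int b * int t = int a * int (b * t div a) + int (b * t mod a)" for t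
    by (metis div_mult_mod_eq mult.commute of_nat_add of_nat_mult)
  then have "int b * (\<Sum>t<a. int t) = int a * (\<Sum>t<a. int (b * t div a)) + (\<Sum>t<a. int (b * t mod a))"
    by (simp add: sum_distrib_left sum.distrib)
  moreover have "2 * (\<Sum>t<a. int t) = int a * (int a - 1)"
    by (induction a) (auto simp: algebra_simps)
  ultimately have "int a * (2 * (\<Sum>t<a. int (b * t div a))) = (int b - 1) * (2 * (\<Sum>t<a. int t))"
    by (simp add: algebra_simps)
  also have "\<dots> = int a * ((int a - 1) * (int b - 1))"
    unfolding \<open>2 * (\<Sum>t<a. int t) = int a * (int a - 1)\<close> by (simp add: algebra_simps)
  finally have "int a * (2 * (\<Sum>t<a. int (b * t div a))) = int a * ((int a - 1) * (int b - 1))" .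
  then show ?thesis
    using assms(2) by simp
qed

lemma sum_div_block:
  fixes f :: nat
  assumes "s \<le> f"
  shows "(\<Sum>t\<in>{q * f..<q * f + s}. int (t div f)) = int q * int s"
proof -
  have "t div f = q" if "t \<in> {q * f..<q * f + s}" for t
    using that assms by (intro div_nat_eqI) (auto simp: algebra_simps)
  then show ?thesis
    by simp
qed

lemma double_sum_div:
  fixes f :: nat
  assumes "s \<le> f"
  shows "2 * (\<Sum>t<q * f + s. int (t div f)) = int f * int q * (int q - 1) + 2 * int q * int s"
proof -
  have multiple: "2 * (\<Sum>t<q * f. int (t div f)) = int f * int q * (int q - 1)" for q
  proof (induction q)
    case (Suc q)
    have "(\<Sum>t<Suc q * f. int (t div f))
        = (\<Sum>t\<in>{0..<q * f}. int (t div f)) + (\<Sum>t\<in>{q * f..<q * f + f}. int (t div f))"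
      by (simp add: sum.atLeastLessThan_concat lessThan_atLeast0 add.commute)
    also have "\<dots> = (\<Sum>t<q * f. int (t div f)) + int q * int f"
      by (simp add: sum_div_block lessThan_atLeast0)
    finally have "(\<Sum>t<Suc q * f. int (t div f)) = (\<Sum>t<q * f. int (t div f)) + int q * int f" .
    with Suc show ?case
      by (simp add: algebra_simps)
  qed simp
  have "(\<Sum>t<q * f + s. int (t div f))
      = (\<Sum>t\<in>{0..<q * f}. int (t div f)) + (\<Sum>t\<in>{q * f..<q * f + s}. int (t div f))"
    by (simp add: sum.atLeastLessThan_concat lessThan_atLeast0)
  also have "\<dots> = (\<Sum>t<q * f. int (t div f)) + int q * int s"
    by (simp add: sum_div_block[OF assms] lessThan_atLeast0)
  finally have "(\<Sum>t<q * f + s. int (t div f)) = (\<Sum>t<q * f. int (t div f)) + int q * int s" .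
  with multiple[of q] show ?thesis
    by (simp add: algebra_simps)
qed

lemma num_reps_three:
  "num_reps n [a, b, c] = card {(x, y, z). a * x + b * y + c * z = n}"
proof -
  have "{xs. length xs = length [a, b, c] \<and> (\<Sum>j<length [a, b, c]. [a, b, c] ! j * xs ! j) = n}
      = (\<lambda>(x, y, z). [x, y, z]) ` {(x, y, z). a * x + b * y + c * z = n}"
  proof (intro set_eqI iffI)
    fix xs assume "xs \<in> {xs. length xs = length [a, b, c] \<and>
        (\<Sum>j<length [a, b, c]. [a, b, c] ! j * xs ! j) = n}"
    moreover from this obtain x y z where "xs = [x, y, z]"
      by (auto simp: numeral_3_eq_3 length_Suc_conv)
    ultimately have "xs = [x, y, z]" and "a * x + b * y + c * z = n"
      by (auto simp: numeral_3_eq_3 lessThan_Suc)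
    then show "xs \<in> (\<lambda>(x, y, z). [x, y, z]) ` {(x, y, z). a * x + b * y + c * z = n}"
      by force
  qed (auto simp: numeral_3_eq_3 lessThan_Suc)
  moreover have "inj (\<lambda>(x :: nat, y :: nat, z :: nat). [x, y, z])"
    by (auto intro: injI)
  ultimately show ?thesis
    unfolding num_reps_def by (simp add: card_image inj_on_subset)
qed

lemma finite_rep_triples:
  fixes a b c :: nat
  assumes "0 < a" and "0 < b" and "0 < c"
  shows "finite {(x, y, z). a * x + b * y + c * z = n}"
proof -
  have "x \<le> n \<and> y \<le> n \<and> z \<le> n" if "a * x + b * y + c * z = n" for x y z
  proof -
    have "x \<le> a * x" "y \<le> b * y" "z \<le> c * z"
      using assms by simp_all
    with that show ?thesis
      by linarith
  qed
  then have "{(x, y, z). a * x + b * y + c * z = n} \<subseteq> {..n} \<times> {..n} \<times> {..n}"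
    by auto
  then show ?thesis
    by (rule finite_subset) simp
qed

locale sylvester_triple =
  fixes a b c f g p :: nat
  assumes third_generator: "c + g * a = f * b"
    and twice_a_le_b: "2 * a \<le> b"
    and twice_g_le_f: "2 * g \<le> f"
    and a_pos: "0 < a"
    and g_pos: "0 < g"
    and coprime_a_b: "coprime a b"
    and p_le: "p \<le> (a - 1) div f"
begin

lemma coprime_b_a: "coprime b a"
  using coprime_a_b by (simp add: coprime_commute)

lemma f_pos: "0 < f"
  using twice_g_le_f g_pos by linarith

lemma four_ag_le_fb: "4 * a * g \<le> f * b"
  using mult_le_mono[OF twice_g_le_f twice_a_le_b] by (simp add: algebra_simps)

lemma c_pos: "0 < c"
proof -
  have "g * a < 4 * a * g"
    using a_pos g_pos by simp
  with four_ag_le_fb third_generator show ?thesis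
    by linarith
qed

lemma f_mult_gap_gt:
  assumes "f * z \<le> t + a * m" and "t < a" and "1 \<le> m"
  shows "int a * int g * (3 * int m - 5) < int f * (int b * (int m - 1) - int g * int z)"
proof -
  have "f * z < a * (m + 1)"
    using assms by (simp add: algebra_simps)
  then have "g * (f * z) < g * (a * (m + 1))"
    using g_pos by simp
  then have "int g * (int f * int z) < int g * (int a * (int m + 1))"
    by (metis of_nat_1 of_nat_add of_nat_less_iff of_nat_mult)
  moreover have "4 * int a * int g * (int m - 1) \<le> int f * int b * (int m - 1)"
    using of_nat_mono[OF four_ag_le_fb] assms(3) by (intro mult_right_mono) auto
  ultimately show ?thesis
    by (simp add: algebra_simps)
qed

lemma g_mult_lt_b_mult:
  assumes "f * z \<le> t + a * m" and "t < a" and "1 \<le> m"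
  shows "g * z < b * m"
proof -
  have "0 \<le> int a * int g * (3 * int m - 1)"
    using assms(3) by simp
  moreover have "4 * int a * int g \<le> int f * int b"
    using of_nat_mono[OF four_ag_le_fb] by simp
  ultimately have "0 < int f * (int b * int m - int g * int z)"
    using f_mult_gap_gt[OF assms] by (simp add: algebra_simps)
  then have "int g * int z < int b * int m"
    using f_pos by (simp add: zero_less_mult_iff)
  then show ?thesis
    by (metis of_nat_less_iff of_nat_mult)
qed

lemma b_add_g_mult_lt_b_mult:
  assumes "f * z \<le> t + a * m" and "t < a" and "2 \<le> m"
  shows "b + g * z < b * m"
proof -
  have "0 \<le> int a * int g * (3 * int m - 5)"
    using assms(3) by simp
  moreover have "int a * int g * (3 * int m - 5) < int f * (int b * (int m - 1) - int g * int z)"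
    using f_mult_gap_gt[OF assms(1,2)] assms(3) by simp
  ultimately have "0 < int f * (int b * (int m - 1) - int g * int z)"
    by linarith
  then have "0 < int b * (int m - 1) - int g * int z"
    using f_pos by (simp add: zero_less_mult_iff)
  then have "int b + int g * int z < int b * int m"
    by (simp add: algebra_simps)
  then show ?thesis
    by (metis of_nat_add of_nat_less_iff of_nat_mult)
qed

lemma g_mult_div_lt_b:
  assumes "t < a"
  shows "g * ((t + a) div f) < b"
proof -
  have "f * (g * ((t + a) div f)) \<le> g * (t + a)"
    using times_div_less_eq_dividend[of f "t + a"] by (metis mult.left_commute mult_le_mono2)
  also have "\<dots> < g * (2 * a)"
    using assms g_pos by simp
  also have "\<dots> \<le> f * b"
    by (rule order.trans[OF _ four_ag_le_fb]) (simp add: algebra_simps)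
  finally show ?thesis
    by simp
qed

lemma p_le_div_add_a: "p \<le> (t + a) div f"
  using p_le div_le_mono[of "a - 1" "t + a" f] by linarith

(* For n = b t + a e, the representations n = a x + b y + c z correspond to the pairs (m, z)
   with y = t + a m - f z and x = e + g z - b m. *)
definition rep_pairs :: "nat \<Rightarrow> int \<Rightarrow> (nat \<times> nat) set" where
  "rep_pairs t e = {(m, z). f * z \<le> t + a * m \<and> int b * int m \<le> e + int g * int z}"

(* If p f \<le> t, only points with m = 0 can be counted below the threshold; otherwise points with
   m = 1 enter as well. *)
definition threshold :: "nat \<Rightarrow> int" where
  "threshold t = (if p * f \<le> t then int g * (int p - int (t div f))
     else int b - int g * (int ((t + a) div f) - int p + int (t div f) + 1))"

lemma rep_pairs_subset_if_p_f_le: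
  assumes "t < a" and "p * f \<le> t" and "e < threshold t"
  shows "rep_pairs t e \<subseteq> {0} \<times> {t div f + 1 - p..t div f}"
proof
  fix x assume "x \<in> rep_pairs t e"
  then obtain m z where x: "x = (m, z)" and fz: "f * z \<le> t + a * m"
    and bm: "int b * int m \<le> e + int g * int z"
    by (auto simp: rep_pairs_def)
  have "p \<le> t div f"
    using assms(2) f_pos by (simp add: less_eq_div_iff_mult_less_eq)
  then have thr: "threshold t = int g * (int p - int (t div f))" and "threshold t \<le> 0"
    using assms(2) by (simp_all add: threshold_def mult_nonneg_nonpos)
  have "m = 0"
  proof (rule ccontr)
    assume "m \<noteq> 0"
    then have "g * z < b * m"
      using g_mult_lt_b_mult[OF fz assms(1)] by simp
    then have "int g * int z < int b * int m"
      by (metis of_nat_less_iff of_nat_mult)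
    with bm assms(3) \<open>threshold t \<le> 0\<close> show False
      by linarith
  qed
  then have "z \<le> t div f"
    using fz f_pos by (simp add: less_eq_div_iff_mult_less_eq mult.commute)
  moreover have "int g * (int (t div f) - int p) < int g * int z"
    using bm assms(3) thr \<open>m = 0\<close> by (simp add: algebra_simps)
  then have "int (t div f) - int p < int z"
    using g_pos by (simp add: mult_less_cancel_left)
  ultimately show "x \<in> {0} \<times> {t div f + 1 - p..t div f}"
    using x \<open>m = 0\<close> by auto
qed

lemma rep_pairs_superset_if_p_f_le:
  assumes "p * f \<le> t" and "threshold t \<le> e"
  shows "{0} \<times> {t div f - p..t div f} \<subseteq> rep_pairs t e"
proof -
  have "(0, z) \<in> rep_pairs t e" if z: "t div f - p \<le> z" "z \<le> t div f" for z
  proof -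
  have "f * z \<le> t"
    using z(2) f_pos by (simp add: less_eq_div_iff_mult_less_eq mult.commute)
  moreover have "int g * (int (t div f) - int p) \<le> int g * int z"
    using z(1) by (intro mult_left_mono) auto
  then have "0 \<le> e + int g * int z"
    using assms by (simp add: threshold_def algebra_simps)
  ultimately show ?thesis
    by (simp add: rep_pairs_def)
  qed
  then show ?thesis
    by auto
qed

lemma rep_pairs_subset_if_lt_p_f:
  assumes "t < a" and "t < p * f" and "e < threshold t"
  shows "rep_pairs t e \<subseteq> {0} \<times> {..t div f} \<union> {1} \<times> {(t + a) div f + t div f + 2 - p..(t + a) div f}"
proof
  fix x assume "x \<in> rep_pairs t e"
  then obtain m z where x: "x = (m, z)" and fz: "f * z \<le> t + a * m"
    and bm: "int b * int m \<le> e + int g * int z"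
    by (auto simp: rep_pairs_def)
  have thr: "threshold t = int b - int g * (int ((t + a) div f) - int p + int (t div f) + 1)"
    using assms(2) by (simp add: threshold_def)
  have "t div f < p"
    using assms(2) f_pos by (simp add: div_less_iff_less_mult)
  then have "threshold t \<le> int b"
    using p_le_div_add_a[of t] by (simp add: thr)
  have "m \<le> 1"
  proof (rule ccontr)
    assume "\<not> m \<le> 1"
    then have "b + g * z < b * m"
      using b_add_g_mult_lt_b_mult[OF fz assms(1)] by simp
    then have "int b + int g * int z < int b * int m"
      by (metis of_nat_add of_nat_less_iff of_nat_mult)
    with bm assms(3) \<open>threshold t \<le> int b\<close> show False
      by linarith
  qed
  then consider "m = 0" | "m = 1"
    by linarith
  then show "x \<in> {0} \<times> {..t div f} \<union> {1} \<times> {(t + a) div f + t div f + 2 - p..(t + a) div f}"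
  proof cases
    case 1
    then show ?thesis
      using x fz f_pos by (simp add: less_eq_div_iff_mult_less_eq mult.commute)
  next
    case 2
    then have "z \<le> (t + a) div f"
      using fz f_pos by (simp add: less_eq_div_iff_mult_less_eq mult.commute)
    moreover have "int g * (int ((t + a) div f) - int p + int (t div f) + 1) < int g * int z"
      using bm assms(3) thr 2 by (simp add: algebra_simps)
    then have "int ((t + a) div f) - int p + int (t div f) + 1 < int z"
      using g_pos by (simp add: mult_less_cancel_left)
    ultimately show ?thesis
      using x 2 by auto
  qed
qed

lemma rep_pairs_superset_if_lt_p_f:
  assumes "t < a" and "t < p * f" and "threshold t \<le> e"
  shows "{0} \<times> {..t div f} \<union> {1} \<times> {(t + a) div f + t div f + 1 - p..(t + a) div f} \<subseteq> rep_pairs t e"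
proof -
  have thr: "threshold t = int b - int g * (int ((t + a) div f) - int p + int (t div f) + 1)"
    using assms(2) by (simp add: threshold_def)
  have "t div f < p"
    using assms(2) f_pos by (simp add: div_less_iff_less_mult)
  then have "int g * (int ((t + a) div f) - int p + int (t div f) + 1) \<le> int g * int ((t + a) div f)"
    by (intro mult_left_mono) auto
  moreover have "int g * int ((t + a) div f) < int b"
    using g_mult_div_lt_b[OF assms(1)] by (metis of_nat_less_iff of_nat_mult)
  ultimately have "0 \<le> e"
    using assms(3) thr by linarith
  have "(0, z) \<in> rep_pairs t e" if "z \<le> t div f" for z
    using that \<open>0 \<le> e\<close> f_pos by (simp add: rep_pairs_def less_eq_div_iff_mult_less_eq mult.commute)
  moreover have "(1, z) \<in> rep_pairs t e"
    if z: "(t + a) div f + t div f + 1 - p \<le> z" "z \<le> (t + a) div f" for z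
  proof -
    have "f * z \<le> t + a"
      using z(2) f_pos by (simp add: less_eq_div_iff_mult_less_eq mult.commute)
    moreover have "int g * (int ((t + a) div f) - int p + int (t div f) + 1) \<le> int g * int z"
      using z(1) p_le_div_add_a[of t] by (intro mult_left_mono) auto
    then have "int b \<le> e + int g * int z"
      using assms(3) thr by linarith
    ultimately show ?thesis
      by (simp add: rep_pairs_def)
  qed
  ultimately show ?thesis
    by auto
qed

lemma card_rep_pairs_le_iff:
  assumes "t < a" and "finite (rep_pairs t e)"
  shows "card (rep_pairs t e) \<le> p \<longleftrightarrow> e < threshold t"
proof (cases "p * f \<le> t")
  case True
  then have "p \<le> t div f"
    using f_pos by (simp add: less_eq_div_iff_mult_less_eq)
  show ?thesis
  proof
    assume "card (rep_pairs t e) \<le> p"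
    moreover have "card ({0::nat} \<times> {t div f - p..t div f}) = p + 1"
      using \<open>p \<le> t div f\<close> by (simp add: card_cartesian_product)
    ultimately show "e < threshold t"
      using card_mono[OF assms(2) rep_pairs_superset_if_p_f_le[OF True]] by fastforce
  next
    assume "e < threshold t"
    then have "card (rep_pairs t e) \<le> card ({0::nat} \<times> {t div f + 1 - p..t div f})"
      by (intro card_mono rep_pairs_subset_if_p_f_le[OF assms(1) True]) auto
    then show "card (rep_pairs t e) \<le> p"
      using \<open>p \<le> t div f\<close> by (simp add: card_cartesian_product)
  qed
next
  case False
  then have "t < p * f"
    by simp
  then have "t div f < p"
    using f_pos by (simp add: div_less_iff_less_mult)
  have "p \<le> (t + a) div f"
    by (rule p_le_div_add_a)
  show ?thesis
  proof
    assume "card (rep_pairs t e) \<le> p"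
    moreover have "card ({0::nat} \<times> {..t div f} \<union> {1} \<times> {(t + a) div f + t div f + 1 - p..(t + a) div f}) = p + 1"
      using \<open>t div f < p\<close> \<open>p \<le> (t + a) div f\<close>
      by (subst card_Un_disjoint) (auto simp: card_cartesian_product)
    ultimately show "e < threshold t"
      using card_mono[OF assms(2) rep_pairs_superset_if_lt_p_f[OF assms(1) \<open>t < p * f\<close>]] by fastforce
  next
    assume "e < threshold t"
    then have "card (rep_pairs t e)
        \<le> card ({0::nat} \<times> {..t div f} \<union> {1} \<times> {(t + a) div f + t div f + 2 - p..(t + a) div f})"
      by (intro card_mono rep_pairs_subset_if_lt_p_f[OF assms(1) \<open>t < p * f\<close>]) auto
    also have "\<dots> = p"
      using \<open>t div f < p\<close> \<open>p \<le> (t + a) div f\<close>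
      by (subst card_Un_disjoint) (auto simp: card_cartesian_product)
    finally show "card (rep_pairs t e) \<le> p" .
  qed
qed

lemma rep_triple_lift:
  assumes "t < a" and n: "int n = int b * int t + int a * e"
    and xyz: "a * x + b * y + c * z = n"
  obtains m where "(m, z) \<in> rep_pairs t e" and "y = t + a * m - f * z"
    and "x = nat (e + int g * int z - int b * int m)"
proof -
  have "int c = int f * int b - int g * int a"
    using third_generator by (metis add_diff_cancel_right' of_nat_add of_nat_mult)
  moreover have "int a * int x + int b * int y + int c * int z = int b * int t + int a * e"
    using xyz n by (metis of_nat_add of_nat_mult)
  ultimately have key: "int b * (int y + int f * int z - int t) = int a * (e + int g * int z - int x)"
    by algebra
  then have "int a dvd int b * (int y + int f * int z - int t)"
    by simp
  then have "int a dvd int y + int f * int z - int t"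
    using coprime_a_b by (simp add: coprime_dvd_mult_right_iff)
  then obtain k where k: "int y + int f * int z - int t = int a * k"
    by (elim dvdE)
  have "0 \<le> int y + int f * int z"
    by simp
  with k \<open>t < a\<close> have "- int a < int a * k"
    by linarith
  then have "int a * (- 1) < int a * k"
    by simp
  then have "- 1 < k"
    using a_pos by (metis mult_less_cancel_left_pos of_nat_0_less_iff)
  then have "0 \<le> k"
    by simp
  define m where "m = nat k"
  have "int a * (int b * k) = int a * (e + int g * int z - int x)"
    using key[unfolded k] by (simp add: mult.left_commute)
  then have bk: "int b * int m = e + int g * int z - int x"
    using a_pos \<open>0 \<le> k\<close> by (simp add: m_def)
  have ym: "int y = int t + int a * int m - int f * int z"
    using k \<open>0 \<le> k\<close> by (simp add: m_def)
  have "int (f * z) \<le> int (t + a * m)"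
    using ym by simp
  then have fz: "f * z \<le> t + a * m"
    by (simp only: of_nat_le_iff)
  show ?thesis
  proof
    show "(m, z) \<in> rep_pairs t e"
      using fz bk by (simp add: rep_pairs_def)
    have "int y = int (t + a * m - f * z)"
      using ym fz by (simp add: of_nat_diff)
    then show "y = t + a * m - f * z"
      by (simp only: of_nat_eq_iff)
    show "x = nat (e + int g * int z - int b * int m)"
      using bk by simp
  qed
qed

lemma bij_betw_rep_pairs_triples:
  assumes "t < a" and n: "int n = int b * int t + int a * e"
  shows "bij_betw (\<lambda>(m, z). (nat (e + int g * int z - int b * int m), t + a * m - f * z, z))
    (rep_pairs t e) {(x, y, z). a * x + b * y + c * z = n}"
proof (rule bij_betw_imageI)
  show "inj_on (\<lambda>(m, z). (nat (e + int g * int z - int b * int m), t + a * m - f * z, z)) (rep_pairs t e)"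
  proof (rule inj_onI)
    fix u v assume u: "u \<in> rep_pairs t e" and v: "v \<in> rep_pairs t e"
      and uv: "(\<lambda>(m, z). (nat (e + int g * int z - int b * int m), t + a * m - f * z, z)) u
        = (\<lambda>(m, z). (nat (e + int g * int z - int b * int m), t + a * m - f * z, z)) v"
    obtain m z m' z' where "u = (m, z)" and "v = (m', z')"
      by fastforce
    with u v uv have "z = z'" and "f * z \<le> t + a * m" and "f * z \<le> t + a * m'"
      and "t + a * m - f * z = t + a * m' - f * z"
      by (auto simp: rep_pairs_def)
    then have "a * m = a * m'"
      by linarith
    with a_pos \<open>u = (m, z)\<close> \<open>v = (m', z')\<close> \<open>z = z'\<close> show "u = v"
      by simp
  qed
  have c: "int c = int f * int b - int g * int a"
    using third_generator by (metis add_diff_cancel_right' of_nat_add of_nat_mult)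
  show "(\<lambda>(m, z). (nat (e + int g * int z - int b * int m), t + a * m - f * z, z)) ` rep_pairs t e
      = {(x, y, z). a * x + b * y + c * z = n}"
  proof (intro equalityI subsetI)
    fix v assume "v \<in> (\<lambda>(m, z). (nat (e + int g * int z - int b * int m), t + a * m - f * z, z)) ` rep_pairs t e"
    then obtain m z where v: "v = (nat (e + int g * int z - int b * int m), t + a * m - f * z, z)"
      and fz: "f * z \<le> t + a * m" and bm: "int b * int m \<le> e + int g * int z"
      by (auto simp: rep_pairs_def)
    have "int (t + a * m - f * z) = int t + int a * int m - int f * int z"
      using fz by (simp add: of_nat_diff)
    moreover have "int (nat (e + int g * int z - int b * int m)) = e + int g * int z - int b * int m"
      using bm by simp
    ultimately have "int (a * nat (e + int g * int z - int b * int m) + b * (t + a * m - f * z) + c * z)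
        = int b * int t + int a * e"
      unfolding of_nat_add of_nat_mult using c by algebra
    then have "a * nat (e + int g * int z - int b * int m) + b * (t + a * m - f * z) + c * z = n"
      using n by (metis of_nat_eq_iff)
    then show "v \<in> {(x, y, z). a * x + b * y + c * z = n}"
      using v by simp
  next
    fix v assume "v \<in> {(x, y, z). a * x + b * y + c * z = n}"
    then obtain x y z where v: "v = (x, y, z)" and "a * x + b * y + c * z = n"
      by auto
    then obtain m where "(m, z) \<in> rep_pairs t e" and "y = t + a * m - f * z"
      and "x = nat (e + int g * int z - int b * int m)"
      using rep_triple_lift[OF \<open>t < a\<close> n] by blast
    with v show "v \<in> (\<lambda>(m, z). (nat (e + int g * int z - int b * int m), t + a * m - f * z, z)) ` rep_pairs t e"
      by (intro image_eqI[where x = "(m, z)"]) simp_all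
  qed
qed

lemma
  assumes "t < a" and "int n = int b * int t + int a * e"
  shows num_reps_eq_card_rep_pairs: "num_reps n [a, b, c] = card (rep_pairs t e)"
    and finite_rep_pairs: "finite (rep_pairs t e)"
  using bij_betw_same_card[OF bij_betw_rep_pairs_triples[OF assms]]
    bij_betw_finite[OF bij_betw_rep_pairs_triples[OF assms]]
    finite_rep_triples[OF a_pos _ c_pos] twice_a_le_b a_pos
  by (simp_all add: num_reps_three)

lemma threshold_plus_div_nonneg:
  assumes "t < a"
  shows "0 \<le> threshold t + int (b * t div a)"
proof (cases "p * f \<le> t")
  case True
  have "g * (t div f) \<le> f * (t div f)"
    using twice_g_le_f by simp
  also have "\<dots> \<le> t"
    by (rule times_div_less_eq_dividend)
  also have "t \<le> b * t div a"
    using twice_a_le_b a_pos by (simp add: less_eq_div_iff_mult_less_eq mult.commute)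
  finally have "int g * int (t div f) \<le> int (b * t div a)"
    by (metis of_nat_le_iff of_nat_mult)
  moreover have "threshold t = int g * int p - int g * int (t div f)"
    using True by (simp add: threshold_def right_diff_distrib)
  moreover have "0 \<le> int g * int p"
    by simp
  ultimately show ?thesis
    by linarith
next
  case False
  then have "t div f < p"
    using f_pos by (simp add: div_less_iff_less_mult)
  then have "int g * (int ((t + a) div f) - int p + int (t div f) + 1) \<le> int g * int ((t + a) div f)"
    by (intro mult_left_mono) auto
  moreover have "int g * int ((t + a) div f) < int b"
    using g_mult_div_lt_b[OF assms] by (metis of_nat_less_iff of_nat_mult)
  ultimately show ?thesis
    using False by (simp add: threshold_def)
qed

lemma num_reps_le_iff:
  assumes "t < a" and "int n = int b * int t + int a * e"
  shows "num_reps n [a, b, c] \<le> p \<longleftrightarrow> e < threshold t"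
  using card_rep_pairs_le_iff[OF assms(1) finite_rep_pairs[OF assms]]
  by (simp add: num_reps_eq_card_rep_pairs[OF assms])

lemma bij_betw_residue_pairs_sylvester_set:
  "bij_betw (\<lambda>(t, e). nat (int b * int t + int a * e))
    (SIGMA t:{..<a}. {- int (b * t div a)..<threshold t}) {n. num_reps n [a, b, c] \<le> p}"
proof (rule bij_betw_imageI)
  have lower: "- int (b * t div a) \<le> e \<longleftrightarrow> 0 \<le> int b * int t + int a * e" for t e
    using minus_div_le_iff[OF a_pos, of "b * t" e] by simp
  show "inj_on (\<lambda>(t, e). nat (int b * int t + int a * e)) (SIGMA t:{..<a}. {- int (b * t div a)..<threshold t})"
  proof (rule inj_onI)
    fix u v assume "u \<in> (SIGMA t:{..<a}. {- int (b * t div a)..<threshold t})"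
      and "v \<in> (SIGMA t:{..<a}. {- int (b * t div a)..<threshold t})"
      and uv: "(\<lambda>(t, e). nat (int b * int t + int a * e)) u = (\<lambda>(t, e). nat (int b * int t + int a * e)) v"
    then obtain t e t' e' where u: "u = (t, e)" and v: "v = (t', e')" and "t < a" "t' < a"
      and "0 \<le> int b * int t + int a * e" "0 \<le> int b * int t' + int a * e'"
      by (auto simp: lower)
    with uv have "int b * int t + int a * e = int b * int t' + int a * e'"
      by simp
    with u v show "u = v"
      using residue_decomposition_unique[OF coprime_b_a \<open>t < a\<close> \<open>t' < a\<close>] by simp
  qed
  show "(\<lambda>(t, e). nat (int b * int t + int a * e)) ` (SIGMA t:{..<a}. {- int (b * t div a)..<threshold t})
      = {n. num_reps n [a, b, c] \<le> p}"
  proof (intro equalityI subsetI)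
    fix n assume "n \<in> (\<lambda>(t, e). nat (int b * int t + int a * e)) ` (SIGMA t:{..<a}. {- int (b * t div a)..<threshold t})"
    then obtain t e where "t < a" "e < threshold t" and "int n = int b * int t + int a * e"
      by (auto simp: lower)
    then show "n \<in> {n. num_reps n [a, b, c] \<le> p}"
      by (simp add: num_reps_le_iff)
  next
    fix n assume "n \<in> {n. num_reps n [a, b, c] \<le> p}"
    moreover obtain t e where "t < a" and ne: "int n = int b * int t + int a * e"
      using residue_decomposition[OF coprime_b_a a_pos] by blast
    ultimately have "e < threshold t"
      by (simp add: num_reps_le_iff)
    with \<open>t < a\<close> ne show "n \<in> (\<lambda>(t, e). nat (int b * int t + int a * e)) ` (SIGMA t:{..<a}. {- int (b * t div a)..<threshold t})"
      by (intro image_eqI[where x = "(t, e)"]) (auto simp: lower)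
  qed
qed

lemma card_sylvester_set:
  "card {n. num_reps n [a, b, c] \<le> p} = (\<Sum>t<a. nat (threshold t + int (b * t div a)))"
  using bij_betw_same_card[OF bij_betw_residue_pairs_sylvester_set] by (simp add: card_SigmaI)

lemma p_times_f_le_a: "p * f \<le> a"
  using p_le div_times_less_eq_dividend[of "a - 1" f] mult_le_mono1[of p "(a - 1) div f" f] by linarith

lemma threshold_eq:
  "threshold t = int g * (int p - int (t div f))
     - (if t < p * f then int g * int ((t + a) div f) + int g - int b else 0)"
  by (simp add: threshold_def algebra_simps)

lemma sum_threshold:
  "(\<Sum>t<a. threshold t) = int g * int p * int a - int g * (\<Sum>t<a + p * f. int (t div f))
     + int (p * f) * (int b - int g)"
proof -
  define h where "h t = int g * int ((t + a) div f) + int g - int b" for t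
  have "(\<Sum>t<a. threshold t)
      = int g * int p * int a - int g * (\<Sum>t<a. int (t div f)) - (\<Sum>t<a. if t < p * f then h t else 0)"
    unfolding threshold_eq h_def by (simp add: sum_subtractf sum_distrib_left right_diff_distrib)
  moreover have "(\<Sum>t<a. if t < p * f then h t else 0) = (\<Sum>t<p * f. h t)"
    using p_times_f_le_a by (intro sum.mono_neutral_cong_right) auto
  moreover have "(\<Sum>t<p * f. h t) = int g * (\<Sum>t<p * f. int ((t + a) div f)) + int (p * f) * (int g - int b)"
    unfolding h_def sum_subtractf sum.distrib by (simp add: sum_distrib_left algebra_simps)
  moreover have "(\<Sum>t<a + p * f. int (t div f)) = (\<Sum>t<a. int (t div f)) + (\<Sum>t<p * f. int ((t + a) div f))"
  proof -
    have "(\<Sum>t<a + p * f. int (t div f)) = (\<Sum>t\<in>{0..<a}. int (t div f)) + (\<Sum>t\<in>{0 + a..<p * f + a}. int (t div f))"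
      by (simp add: sum.atLeastLessThan_concat lessThan_atLeast0 add.commute)
    then show ?thesis
      by (simp only: sum.shift_bounds_nat_ivl lessThan_atLeast0)
  qed
  ultimately show ?thesis
    by (simp add: algebra_simps)
qed

lemma double_sum_threshold:
  defines "r \<equiv> (a - 1) div f"
  shows "2 * (\<Sum>t<a. threshold t) = 2 * int p * int f * int b - 2 * int g * int r * int a
    + int g * int f * (int r + int p + 1) * (int r - int p)"
proof -
  define s where "s = a - r * f"
  have "r * f \<le> a - 1" and "a - 1 < r * f + f"
    using div_times_less_eq_dividend[of "a - 1" f] mod_less_divisor[OF f_pos, of "a - 1"]
      div_mult_mod_eq[of "a - 1" f] unfolding r_def by linarith+
  then have "s \<le> f" and a: "int a = int r * int f + int s"
    using a_pos unfolding s_def by (simp_all add: of_nat_diff)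
  have "a + p * f = (r + p) * f + s"
    using \<open>r * f \<le> a - 1\<close> unfolding s_def by (simp add: algebra_simps)
  then have "2 * (\<Sum>t<a + p * f. int (t div f))
      = int f * int (r + p) * (int (r + p) - 1) + 2 * int (r + p) * int s"
    using double_sum_div[OF \<open>s \<le> f\<close>, of "r + p"] by simp
  with a show ?thesis
    unfolding sum_threshold of_nat_mult of_nat_add by algebra
qed

lemma double_sylvester_p:
  defines "r \<equiv> (a - 1) div f"
  shows "2 * int (sylvester_p p [a, b, c]) = (int a - 1) * (int b - 1)
    + 2 * int p * int f * int b - 2 * int g * int r * int a
    + int g * int f * (int r + int p + 1) * (int r - int p)"
proof -
  have "int (card {n. num_reps n [a, b, c] \<le> p}) = (\<Sum>t<a. threshold t + int (b * t div a))"
    by (simp add: card_sylvester_set threshold_plus_div_nonneg)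
  also have "\<dots> = (\<Sum>t<a. threshold t) + (\<Sum>t<a. int (b * t div a))"
    by (rule sum.distrib)
  finally show ?thesis
    using double_sum_threshold double_sum_mult_div[OF coprime_b_a a_pos]
    unfolding r_def sylvester_p_def by simp
qed

end

theorem theorem13:
  fixes i k p :: nat
  assumes "i \<ge> 3" and "k \<ge> 3"
    and "r = (fib i - 1) div fib k"
    and "r \<ge> p"
  shows "real (sylvester_p p [fib i, fib (i + 2), fib (i + k)]) =
     ((real (fib i) + 2 * real p * real (fib k) - 1) * real (fib (i + 2)) - real (fib i) + 1) / 2
     - (2 * real r * real (fib i) - (real r + real p + 1) * (real r - real p) * real (fib k))
       * real (fib (k - 2)) / 2"
proof -
  have k: "k = (k - 2) + 2"
    using assms(2) by simp
  have "fib (i + k) + fib (k - 2) * fib i = fib k * fib (i + 2)"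
    using fib_add_two_mult[of i "k - 2"] by (simp only: k[symmetric] add.assoc)
  moreover have "2 * fib i \<le> fib (i + 2)"
    using fib_plus_2[of i] fib_Suc_mono[of i] by simp
  moreover have "2 * fib (k - 2) \<le> fib k"
    using fib_plus_2[of "k - 2"] fib_Suc_mono[of "k - 2"] by (simp only: k[symmetric]) simp
  moreover have "0 < fib i" and "0 < fib (k - 2)"
    using assms(1,2) by (simp_all add: fib_neq_0_nat)
  ultimately interpret sylvester_triple "fib i" "fib (i + 2)" "fib (i + k)" "fib k" "fib (k - 2)" p
    using coprime_fib_add_two[of i] assms(3,4) by unfold_locales auto
  have "real_of_int (2 * int (sylvester_p p [fib i, fib (i + 2), fib (i + k)]))
      = real_of_int ((int (fib i) - 1) * (int (fib (i + 2)) - 1)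
        + 2 * int p * int (fib k) * int (fib (i + 2)) - 2 * int (fib (k - 2)) * int r * int (fib i)
        + int (fib (k - 2)) * int (fib k) * (int r + int p + 1) * (int r - int p))"
    using double_sylvester_p assms(3) by simp
  then show ?thesis
    by (simp add: field_simps)
qed

end
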